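(* Let $\mathbf{V}$ be a finite set of random variables containing a target variable $T$, and let $\mathbf{F} = \mathbf{V} \setminus \{T\}$ be the set of features. Suppose the joint distribution $P$ of $\mathbf{V}$ can be faithfully represented by a Bayesian network, and suppose the algorithm PFBP (described in the context) has access to a conditional independence oracle for $P$ and imposes no limit on the number of selected features. Then PFBP run with two Runs returns the Markov blanket of $T$.
   Context: Notation: $\mathbf{X} \perp T \mid \mathbf{S}$ denotes conditional independence of $\mathbf{X}$ and $T$ given $\mathbf{S}$ under $P$. A Markov blanket of $T$ with respect to $\mathbf{V}$ is a minimal set $\mathbf{S} \subseteq \mathbf{F}$ such that $(\mathbf{V}\setminus(\mathbf{S}\cup\{T\})) \perp T \mid \mathbf{S}$; for distributions faithful to a Bayesian network it is unique. A Bayesian network is a pair $\langle G, P\rangle$ with $G$ a DAG over $\mathbf{V}$ satisfying the Markov condition (each variable is independent of its non-descendants given its parents); $P$ is faithful to $G$ if all and only the conditional independencies of $P$ are those entailed by the Markov condition (equivalently, by d-separation in $G$); $P$ can be faithfully represented by a Bayesian network if such a $G$ exists. The PFBP algorithm with an independence oracle (Parallel Forward-Backward with Pruning, with Early Dropping) operates as follows. Initially the selected set is $\mathbf{S} = \emptyset$. It performs Runs, up to a maximum number maxRuns of Runs, stopping early if a Run leaves $\mathbf{S}$ unchanged. Each Run consists of: (1) set the remaining set $\mathbf{R} = \mathbf{F} \setminus \mathbf{S}$; (2) forward phase: repeat iterations in which every $X \in \mathbf{R}$ with $X \perp T \mid \mathbf{S}$ is removed from $\mathbf{R}$ (Early Dropping),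 and then, if some $X \in \mathbf{R}$ is conditionally dependent on $T$ given $\mathbf{S}$, one such variable (the best-ranked one) is added to $\mathbf{S}$ and removed from $\mathbf{R}$; the forward phase ends when no variable is added; (3) backward phase: repeatedly, if some $X \in \mathbf{S}$ satisfies $X \perp T \mid \mathbf{S}\setminus\{X\}$, remove one such variable from $\mathbf{S}$; stop when no variable can be removed. The output is $\mathbf{S}$. *)

theory Defs
  imports Main
begin

text \<open>A DAG over the finite variable set V is given by an edge relation E,
  with (a,b) \<in> E meaning a \<rightarrow> b.\<close>

definition is_dag :: "'v set \<Rightarrow> ('v \<times> 'v) set \<Rightarrow> bool" where
  "is_dag V E \<longleftrightarrow> E \<subseteq> V \<times> V \<and> acyclic E"

definition adjacent :: "('v \<times> 'v) set \<Rightarrow> 'v \<Rightarrow> 'v \<Rightarrow> bool" where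
  "adjacent E a b \<longleftrightarrow> (a, b) \<in> E \<or> (b, a) \<in> E"

definition is_path :: "'v set \<Rightarrow> ('v \<times> 'v) set \<Rightarrow> 'v list \<Rightarrow> 'v \<Rightarrow> 'v \<Rightarrow> bool" where
  "is_path V E p x y \<longleftrightarrow> p \<noteq> [] \<and> hd p = x \<and> last p = y \<and> distinct p \<and> set p \<subseteq> V \<and>
     (\<forall>i. Suc i < length p \<longrightarrow> adjacent E (p ! i) (p ! Suc i))"

definition collider :: "('v \<times> 'v) set \<Rightarrow> 'v list \<Rightarrow> nat \<Rightarrow> bool" where
  "collider E p i \<longleftrightarrow> (p ! (i - 1), p ! i) \<in> E \<and> (p ! Suc i, p ! i) \<in> E"

definition active :: "('v \<times> 'v) set \<Rightarrow> 'v set \<Rightarrow> 'v list \<Rightarrow> bool" where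
  "active E Z p \<longleftrightarrow> (\<forall>i. 0 < i \<and> Suc i < length p \<longrightarrow>
      (if collider E p i then (\<exists>w\<in>Z. (p ! i, w) \<in> E\<^sup>*) else p ! i \<notin> Z))"

definition dsep :: "'v set \<Rightarrow> ('v \<times> 'v) set \<Rightarrow> 'v set \<Rightarrow> 'v set \<Rightarrow> 'v set \<Rightarrow> bool" where
  "dsep V E X Y Z \<longleftrightarrow>
     (\<forall>x\<in>X. \<forall>y\<in>Y. \<not> (\<exists>p. is_path V E p x y \<and> active E Z p))"

text \<open>The distribution P is represented by its conditional-independence
  relation ci (the oracle): ci X Y Z means X \<perp> Y | Z under P.
  P is faithful to the DAG (V,E): for pairwise disjoint subsets of V,
  the independencies of P are exactly the d-separations of the DAG.\<close>

definition faithful_to :: "'v set \<Rightarrow> ('v set \<Rightarrow> 'v set \<Rightarrow> 'v set \<Rightarrow> bool) \<Rightarrow> ('v \<times> 'v) set \<Rightarrow> bool" where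
  "faithful_to V ci E \<longleftrightarrow> is_dag V E \<and>
     (\<forall>X Y Z. X \<subseteq> V \<longrightarrow> Y \<subseteq> V \<longrightarrow> Z \<subseteq> V \<longrightarrow>
        X \<inter> Y = {} \<longrightarrow> X \<inter> Z = {} \<longrightarrow> Y \<inter> Z = {} \<longrightarrow>
        (ci X Y Z \<longleftrightarrow> dsep V E X Y Z))"

definition faithfully_representable :: "'v set \<Rightarrow> ('v set \<Rightarrow> 'v set \<Rightarrow> 'v set \<Rightarrow> bool) \<Rightarrow> bool" where
  "faithfully_representable V ci \<longleftrightarrow> (\<exists>E. faithful_to V ci E)"

definition blanket_cond :: "'v set \<Rightarrow> ('v set \<Rightarrow> 'v set \<Rightarrow> 'v set \<Rightarrow> bool) \<Rightarrow> 'v \<Rightarrow> 'v set \<Rightarrow> bool" where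
  "blanket_cond V ci T S \<longleftrightarrow> S \<subseteq> V - {T} \<and> ci (V - (S \<union> {T})) {T} S"

definition markov_blanket :: "'v set \<Rightarrow> ('v set \<Rightarrow> 'v set \<Rightarrow> 'v set \<Rightarrow> bool) \<Rightarrow> 'v \<Rightarrow> 'v set \<Rightarrow> bool" where
  "markov_blanket V ci T S \<longleftrightarrow> blanket_cond V ci T S \<and>
     (\<forall>S'. S' \<subset> S \<longrightarrow> \<not> blanket_cond V ci T S')"

text \<open>In each iteration Early Dropping
  removes every X \<in> R with X \<perp> T | S; then, if some remaining variable
  (necessarily dependent on T given S) exists, one of them (an arbitrary one:
  the ranking is left unspecified) is added to S. No limit on |S|.\<close>
inductive forward :: "('v set \<Rightarrow> 'v set \<Rightarrow> 'v set \<Rightarrow> bool) \<Rightarrow> 'v \<Rightarrow> 'v set \<Rightarrow> 'v set \<Rightarrow> 'v set \<Rightarrow> bool"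
  for ci T where
  fwd_stop: "{X \<in> R. \<not> ci {X} {T} S} = {} \<Longrightarrow> forward ci T S R S"
| fwd_add: "X \<in> {X \<in> R. \<not> ci {X} {T} S} \<Longrightarrow>
    forward ci T (insert X S) ({X \<in> R. \<not> ci {X} {T} S} - {X}) S' \<Longrightarrow>
    forward ci T S R S'"

inductive backward :: "('v set \<Rightarrow> 'v set \<Rightarrow> 'v set \<Rightarrow> bool) \<Rightarrow> 'v \<Rightarrow> 'v set \<Rightarrow> 'v set \<Rightarrow> bool"
  for ci T where
  bwd_stop: "(\<forall>X\<in>S. \<not> ci {X} {T} (S - {X})) \<Longrightarrow> backward ci T S S"
| bwd_remove: "X \<in> S \<Longrightarrow> ci {X} {T} (S - {X}) \<Longrightarrow> backward ci T (S - {X}) S' \<Longrightarrow>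
    backward ci T S S'"

definition pfbp_run :: "('v set \<Rightarrow> 'v set \<Rightarrow> 'v set \<Rightarrow> bool) \<Rightarrow> 'v \<Rightarrow> 'v set \<Rightarrow> 'v set \<Rightarrow> 'v set \<Rightarrow> bool" where
  "pfbp_run ci T F S S'' \<longleftrightarrow> (\<exists>S'. forward ci T S (F - S) S' \<and> backward ci T S' S'')"

text \<open>pfbp_runs ci T F n S out: starting from selected set S, performing at most
  n Runs (stopping early if a Run leaves S unchanged), the output can be out.\<close>
inductive pfbp_runs :: "('v set \<Rightarrow> 'v set \<Rightarrow> 'v set \<Rightarrow> bool) \<Rightarrow> 'v \<Rightarrow> 'v set \<Rightarrow> nat \<Rightarrow> 'v set \<Rightarrow> 'v set \<Rightarrow> bool"
  for ci T F where
  runs_done: "pfbp_runs ci T F 0 S S"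
| runs_unchanged: "pfbp_run ci T F S S \<Longrightarrow> pfbp_runs ci T F (Suc n) S S"
| runs_changed: "pfbp_run ci T F S S' \<Longrightarrow> S' \<noteq> S \<Longrightarrow> pfbp_runs ci T F n S' out \<Longrightarrow>
    pfbp_runs ci T F (Suc n) S out"

definition PFBP :: "('v set \<Rightarrow> 'v set \<Rightarrow> 'v set \<Rightarrow> bool) \<Rightarrow> 'v \<Rightarrow> 'v set \<Rightarrow> nat \<Rightarrow> 'v set \<Rightarrow> bool" where
  "PFBP ci T F maxRuns out \<longleftrightarrow> pfbp_runs ci T F maxRuns {} out"

end

theory Submission
  imports Defs
begin

text \<open>Faithfulness turns every independence of T into a d-separation. Let B be the graphical
  Markov blanket of T (parents, children and spouses). A neighbour of T is dependent on T given
  any set avoiding it, and a spouse given any set avoiding it but containing the common child.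
  Conversely, every S \<supseteq> B blocks all paths from outside S to T: the last inner node lies in B,
  so it must be a collider; then the node before it is a spouse, hence in S and a collider too,
  which orients one edge both ways. So the first Run selects every neighbour of T, and a Run
  started from a superset of the neighbours selects all of B in its forward phase and keeps
  exactly B in its backward phase.\<close>

definition neighbours :: "'v set \<Rightarrow> ('v \<times> 'v) set \<Rightarrow> 'v \<Rightarrow> 'v set" where
  "neighbours V E T = {x \<in> V. x \<noteq> T \<and> adjacent E x T}"

definition dag_blanket :: "'v set \<Rightarrow> ('v \<times> 'v) set \<Rightarrow> 'v \<Rightarrow> 'v set" where
  "dag_blanket V E T = {x \<in> V. x \<noteq> T \<and> (adjacent E x T \<or> (\<exists>c. (x, c) \<in> E \<and> (T, c) \<in> E))}"

lemma neighbours_subset_dag_blanket: "neighbours V E T \<subseteq> dag_blanket V E T"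
  by (auto simp: neighbours_def dag_blanket_def)

lemma dag_blanket_subset: "dag_blanket V E T \<subseteq> V - {T}"
  by (auto simp: dag_blanket_def)

lemma acyclic_irrefl_edge: "acyclic E \<Longrightarrow> (x, x) \<notin> E"
  by (meson acyclic_def r_into_trancl')

lemma acyclic_asym_edge: "acyclic E \<Longrightarrow> (x, y) \<in> E \<Longrightarrow> (y, x) \<notin> E"
  by (meson acyclic_def r_into_trancl' trancl_into_trancl)

lemma edge_path_active:
  assumes "is_dag V E" "adjacent E x T" "x \<noteq> T"
  shows "is_path V E [x, T] x T \<and> active E Z [x, T]"
  using assms unfolding is_dag_def is_path_def active_def adjacent_def
  by (auto simp: less_Suc_eq)

lemma collider_path_active:
  assumes "is_dag V E" "(x, c) \<in> E" "(T, c) \<in> E" "x \<noteq> T" "c \<in> Z"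
  shows "is_path V E [x, c, T] x T \<and> active E Z [x, c, T]"
proof -
  have "acyclic E" and "E \<subseteq> V \<times> V"
    using assms(1) by (auto simp: is_dag_def)
  moreover have "x \<noteq> c" "T \<noteq> c"
    using acyclic_irrefl_edge[OF \<open>acyclic E\<close>] assms(2,3) by auto
  moreover have "\<And>i. 0 < i \<Longrightarrow> Suc i < 3 \<Longrightarrow> i = 1"
    by auto
  ultimately show ?thesis
    using assms unfolding is_path_def active_def adjacent_def collider_def
    by (auto simp: less_Suc_eq nth_Cons')
qed

lemma active_member_collider:
  "active E Z p \<Longrightarrow> 0 < i \<Longrightarrow> Suc i < length p \<Longrightarrow> p ! i \<in> Z \<Longrightarrow> collider E p i"
  unfolding active_def by metis

lemma path_member_inner:
  assumes "is_path V E p x T" "x \<notin> S" "T \<notin> S" "i < length p" "p ! i \<in> S"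
  shows "0 < i \<and> Suc i < length p"
proof -
  have "p ! 0 = x" "p ! (length p - 1) = T"
    using assms(1) by (auto simp: is_path_def hd_conv_nth last_conv_nth)
  then show ?thesis
    using assms(2-5) by (metis Suc_lessI diff_Suc_1 gr0I)
qed

lemma dag_blanket_blocks_paths:
  assumes dag: "is_dag V E"
    and B: "dag_blanket V E T \<subseteq> S" "S \<subseteq> V - {T}"
    and x: "x \<notin> S" "x \<noteq> T"
    and p: "is_path V E p x T" "active E S p"
  shows False
proof -
  have ac: "acyclic E"
    using dag by (simp add: is_dag_def)
  have inner: "\<And>i. i < length p \<Longrightarrow> p ! i \<in> S \<Longrightarrow> 0 < i \<and> Suc i < length p"
    using path_member_inner[OF p(1) x(1)] B(2) by blast
  have inV: "\<And>i. i < length p \<Longrightarrow> p ! i \<in> V" and dist: "distinct p"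
    using p(1) by (auto simp: is_path_def)
  have "length p \<noteq> 0" "length p \<noteq> 1"
    using p(1) x(2) by (auto simp: is_path_def length_Suc_conv)
  then obtain j where len: "length p = Suc (Suc j)"
    by (cases "length p" rule: nat.exhaust; cases "length p - 1" rule: nat.exhaust) auto
  have T: "p ! Suc j = T"
    using p(1) len by (auto simp: is_path_def last_conv_nth)
  have bT: "p ! j \<noteq> T"
    using nth_eq_iff_index_eq[OF dist, of j "Suc j"] len T by auto
  have "adjacent E (p ! j) T"
    using p(1) len T by (auto simp: is_path_def)
  then have "p ! j \<in> S"
    using B(1) inV[of j] bT len by (auto simp: dag_blanket_def)
  then obtain i where j: "j = Suc i"
    using inner[of j] len by (auto simp: gr0_conv_Suc)
  have "collider E p j"
    using active_member_collider[OF p(2)] inner \<open>p ! j \<in> S\<close> len by auto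
  then have ab: "(p ! i, p ! j) \<in> E" and Tb: "(T, p ! j) \<in> E"
    using T j by (auto simp: collider_def)
  have "p ! i \<noteq> T"
    using nth_eq_iff_index_eq[OF dist, of i "Suc (Suc i)"] len T j by auto
  then have "p ! i \<in> S"
    using B(1) inV[of i] ab Tb len j by (auto simp: dag_blanket_def)
  then have "collider E p i"
    using active_member_collider[OF p(2)] inner len j by auto
  then have "(p ! j, p ! i) \<in> E"
    using j by (simp add: collider_def)
  then show False
    using acyclic_asym_edge[OF ac ab] by blast
qed

lemma forward_subset:
  "forward ci T S R S' \<Longrightarrow> S \<subseteq> F \<Longrightarrow> R \<subseteq> F \<Longrightarrow> S \<subseteq> S' \<and> S' \<subseteq> F"
  by (induction rule: forward.induct) auto

lemma forward_selects:
  assumes "forward ci T S R S'" "A \<subseteq> S \<union> R"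
    and "\<forall>x\<in>A. \<forall>Z. S \<subseteq> Z \<longrightarrow> Z \<subseteq> S \<union> R \<longrightarrow> x \<notin> Z \<longrightarrow> \<not> ci {x} {T} Z"
  shows "A \<subseteq> S'"
  using assms
proof (induction rule: forward.induct)
  case (fwd_stop R S)
  have "x \<in> S" if "x \<in> A" for x
  proof (rule ccontr)
    assume "x \<notin> S"
    then have "x \<in> {X \<in> R. \<not> ci {X} {T} S}"
      using fwd_stop.prems that by blast
    then show False
      using fwd_stop.hyps by blast
  qed
  then show ?case by blast
next
  case (fwd_add X R S S')
  let ?R' = "{X \<in> R. \<not> ci {X} {T} S} - {X}"
  have "A \<subseteq> insert X S \<union> ?R'"
  proof
    fix x
    assume "x \<in> A"
    show "x \<in> insert X S \<union> ?R'"
    proof (cases "x \<in> insert X S")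
      case False
      then have "\<not> ci {x} {T} S"
        using fwd_add.prems \<open>x \<in> A\<close> by blast
      then show ?thesis
        using False fwd_add.prems(1) \<open>x \<in> A\<close> by blast
    qed blast
  qed
  moreover have "\<forall>x\<in>A. \<forall>Z. insert X S \<subseteq> Z \<longrightarrow> Z \<subseteq> insert X S \<union> ?R' \<longrightarrow> x \<notin> Z
      \<longrightarrow> \<not> ci {x} {T} Z"
    using fwd_add.hyps(1) fwd_add.prems(2) by blast
  ultimately show ?case
    by (rule fwd_add.IH)
qed

lemma backward_subset: "backward ci T S S' \<Longrightarrow> S' \<subseteq> S"
  by (induction rule: backward.induct) auto

lemma backward_final: "backward ci T S S' \<Longrightarrow> X \<in> S' \<Longrightarrow> \<not> ci {X} {T} (S' - {X})"
  by (induction rule: backward.induct) auto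

lemma backward_keeps:
  assumes "backward ci T S S'" "A \<subseteq> S"
    and "\<forall>x\<in>A. \<forall>Z. A - {x} \<subseteq> Z \<longrightarrow> Z \<subseteq> S \<longrightarrow> x \<notin> Z \<longrightarrow> \<not> ci {x} {T} Z"
  shows "A \<subseteq> S'"
  using assms
proof (induction rule: backward.induct)
  case (bwd_stop S)
  then show ?case by blast
next
  case (bwd_remove X S S')
  have "X \<notin> A"
  proof
    assume "X \<in> A"
    moreover have "A - {X} \<subseteq> S - {X}" "S - {X} \<subseteq> S"
      using bwd_remove.prems(1) by blast+
    ultimately have "\<not> ci {X} {T} (S - {X})"
      using bwd_remove.prems(2) by blast
    then show False
      using bwd_remove.hyps(2) by blast
  qed
  then show ?case
    using bwd_remove.IH bwd_remove.prems by blast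
qed

lemma pfbp_run_subset:
  assumes "pfbp_run ci T F S S'" "S \<subseteq> F"
  shows "S' \<subseteq> F"
proof -
  obtain S1 where fwd: "forward ci T S (F - S) S1" and bwd: "backward ci T S1 S'"
    using assms(1) unfolding pfbp_run_def by blast
  have "S1 \<subseteq> F"
    using forward_subset[OF fwd] assms(2) by simp
  then show ?thesis
    using backward_subset[OF bwd] by (rule order_trans[rotated])
qed

lemma pfbp_runs_0: "pfbp_runs ci T F 0 S out \<Longrightarrow> out = S"
  by (auto elim: pfbp_runs.cases)

lemma pfbp_runs_SucE:
  assumes "pfbp_runs ci T F (Suc n) S out"
  obtains S' where "pfbp_run ci T F S S'" "pfbp_runs ci T F n S' out"
  using assms
proof cases
  case runs_unchanged
  moreover have "pfbp_runs ci T F n S S"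
    using runs_unchanged by (cases n) (auto intro: pfbp_runs.intros)
  ultimately show ?thesis
    using that by blast
next
  case (runs_changed S')
  then show ?thesis
    using that by blast
qed

context
  fixes V :: "'v set" and E :: "('v \<times> 'v) set" and ci :: "'v set \<Rightarrow> 'v set \<Rightarrow> 'v set \<Rightarrow> bool"
    and T :: 'v
  assumes faithful: "faithful_to V ci E" and target: "T \<in> V"
begin

lemma faithful_dag: "is_dag V E"
  using faithful by (simp add: faithful_to_def)

lemma ci_target_iff_dsep:
  assumes "W \<subseteq> V" "T \<notin> W" "Z \<subseteq> V - {T}" "W \<inter> Z = {}"
  shows "ci W {T} Z \<longleftrightarrow> dsep V E W {T} Z"
proof -
  have "{T} \<subseteq> V" "Z \<subseteq> V" "W \<inter> {T} = {}" "{T} \<inter> Z = {}"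
    using assms target by auto
  then show ?thesis
    using faithful assms(1,4) unfolding faithful_to_def by simp
qed

lemma active_path_dependent:
  assumes "x \<in> W" "W \<subseteq> V" "T \<notin> W" "Z \<subseteq> V - {T}" "W \<inter> Z = {}"
    and "is_path V E p x T" "active E Z p"
  shows "\<not> ci W {T} Z"
  using ci_target_iff_dsep[OF assms(2-5)] assms(1,6,7) unfolding dsep_def by blast

lemma neighbour_dependent:
  assumes "x \<in> neighbours V E T" "Z \<subseteq> V - {T}" "x \<notin> Z"
  shows "\<not> ci {x} {T} Z"
  using assms active_path_dependent[of x "{x}" Z "[x, T]"] edge_path_active[OF faithful_dag]
  by (auto simp: neighbours_def)

lemma dag_blanket_dependent:
  assumes x: "x \<in> dag_blanket V E T" and Z: "Z \<subseteq> V - {T}" "x \<notin> Z"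
    and nb: "neighbours V E T - {x} \<subseteq> Z"
  shows "\<not> ci {x} {T} Z"
proof (cases "adjacent E x T")
  case True
  then show ?thesis
    using neighbour_dependent x Z by (auto simp: neighbours_def dag_blanket_def)
next
  case False
  then obtain c where c: "(x, c) \<in> E" "(T, c) \<in> E" and xT: "x \<noteq> T" "x \<in> V"
    using x by (auto simp: dag_blanket_def)
  have "acyclic E" "E \<subseteq> V \<times> V"
    using faithful_dag by (auto simp: is_dag_def)
  then have "c \<in> neighbours V E T - {x}"
    using c acyclic_irrefl_edge by (fastforce simp: neighbours_def adjacent_def)
  then show ?thesis
    using active_path_dependent[of x "{x}" Z "[x, c, T]"] collider_path_active[OF faithful_dag c xT(1)]
      nb Z xT by auto
qed

lemma outside_dag_blanket_independent:
  assumes "dag_blanket V E T \<subseteq> S" "S \<subseteq> V - {T}" "x \<in> V" "x \<noteq> T" "x \<notin> S"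
  shows "ci {x} {T} S"
  using ci_target_iff_dsep[of "{x}" S] assms dag_blanket_blocks_paths[OF faithful_dag assms(1,2)]
  unfolding dsep_def by auto

lemma ci_target_decomposition:
  assumes "ci W {T} Z" "x \<in> W" "W \<subseteq> V" "T \<notin> W" "Z \<subseteq> V - {T}" "W \<inter> Z = {}"
  shows "ci {x} {T} Z"
proof -
  have "dsep V E W {T} Z"
    using ci_target_iff_dsep assms(1,3-6) by blast
  then have "dsep V E {x} {T} Z"
    using assms(2) unfolding dsep_def by blast
  then show ?thesis
    using ci_target_iff_dsep[of "{x}" Z] assms(2-6) by blast
qed

lemma blanket_cond_iff: "blanket_cond V ci T S \<longleftrightarrow> dag_blanket V E T \<subseteq> S \<and> S \<subseteq> V - {T}"
proof
  assume "blanket_cond V ci T S"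
  then have S: "S \<subseteq> V - {T}" and indep: "ci (V - (S \<union> {T})) {T} S"
    by (auto simp: blanket_cond_def)
  have indep_x: "ci {x} {T} S" if "x \<in> V" "x \<noteq> T" "x \<notin> S" for x
    using ci_target_decomposition[OF indep] that S by blast
  have "neighbours V E T \<subseteq> S"
    using indep_x neighbour_dependent[OF _ S] by (auto simp: neighbours_def)
  then have "dag_blanket V E T \<subseteq> S"
    using indep_x dag_blanket_dependent[OF _ S] by (auto simp: dag_blanket_def)
  then show "dag_blanket V E T \<subseteq> S \<and> S \<subseteq> V - {T}"
    using S by blast
next
  assume S: "dag_blanket V E T \<subseteq> S \<and> S \<subseteq> V - {T}"
  then have "dsep V E (V - (S \<union> {T})) {T} S"
    using dag_blanket_blocks_paths[OF faithful_dag] unfolding dsep_def by blast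
  then show "blanket_cond V ci T S"
    using ci_target_iff_dsep[of "V - (S \<union> {T})" S] S by (auto simp: blanket_cond_def)
qed

lemma markov_blanket_iff: "markov_blanket V ci T S \<longleftrightarrow> S = dag_blanket V E T"
proof -
  have B: "blanket_cond V ci T (dag_blanket V E T)"
    by (simp add: blanket_cond_iff dag_blanket_subset)
  show ?thesis
  proof
    assume S: "markov_blanket V ci T S"
    then have "dag_blanket V E T \<subseteq> S"
      unfolding markov_blanket_def blanket_cond_iff by blast
    moreover have "\<not> dag_blanket V E T \<subset> S"
      using S B unfolding markov_blanket_def by blast
    ultimately show "S = dag_blanket V E T"
      by blast
  next
    assume "S = dag_blanket V E T"
    then show "markov_blanket V ci T S"
      using B unfolding markov_blanket_def blanket_cond_iff by blast
  qed
qed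

lemma pfbp_run_selects_neighbours:
  assumes run: "pfbp_run ci T (V - {T}) S S''" and S: "S \<subseteq> V - {T}"
  shows "neighbours V E T \<subseteq> S''"
proof -
  let ?N = "neighbours V E T"
  obtain S' where fwd: "forward ci T S (V - {T} - S) S'" and bwd: "backward ci T S' S''"
    using run unfolding pfbp_run_def by blast
  have S': "S' \<subseteq> V - {T}"
    using forward_subset[OF fwd] S by blast
  have "?N \<subseteq> S \<union> (V - {T} - S)"
    using neighbours_subset_dag_blanket[of V E T] dag_blanket_subset[of V E T] by blast
  then have "?N \<subseteq> S'"
  proof (rule forward_selects[OF fwd], intro ballI allI impI)
    fix x Z
    assume "x \<in> ?N" "Z \<subseteq> S \<union> (V - {T} - S)" "x \<notin> Z"
    with S show "\<not> ci {x} {T} Z"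
      by (intro neighbour_dependent) auto
  qed
  then show ?thesis
  proof (rule backward_keeps[OF bwd], intro ballI allI impI)
    fix x Z
    assume "x \<in> ?N" "Z \<subseteq> S'" "x \<notin> Z"
    with S' show "\<not> ci {x} {T} Z"
      by (intro neighbour_dependent) auto
  qed
qed

lemma pfbp_run_from_neighbours:
  assumes run: "pfbp_run ci T (V - {T}) S S''" and S: "S \<subseteq> V - {T}"
    and nb: "neighbours V E T \<subseteq> S"
  shows "S'' = dag_blanket V E T"
proof -
  let ?B = "dag_blanket V E T"
  obtain S' where fwd: "forward ci T S (V - {T} - S) S'" and bwd: "backward ci T S' S''"
    using run unfolding pfbp_run_def by blast
  have S': "S' \<subseteq> V - {T}"
    using forward_subset[OF fwd] S by blast
  have S'': "S'' \<subseteq> S'"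
    using backward_subset[OF bwd] .
  have "?B \<subseteq> S \<union> (V - {T} - S)"
    using dag_blanket_subset[of V E T] by blast
  then have "?B \<subseteq> S'"
  proof (rule forward_selects[OF fwd], intro ballI allI impI)
    fix x Z
    assume "x \<in> ?B" "S \<subseteq> Z" "Z \<subseteq> S \<union> (V - {T} - S)" "x \<notin> Z"
    moreover from this have "Z \<subseteq> V - {T}" "neighbours V E T - {x} \<subseteq> Z"
      using S nb by blast+
    ultimately show "\<not> ci {x} {T} Z"
      by (intro dag_blanket_dependent)
  qed
  then have B: "?B \<subseteq> S''"
  proof (rule backward_keeps[OF bwd], intro ballI allI impI)
    fix x Z
    assume "x \<in> ?B" "?B - {x} \<subseteq> Z" "Z \<subseteq> S'" "x \<notin> Z"
    moreover from this have "Z \<subseteq> V - {T}" "neighbours V E T - {x} \<subseteq> Z"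
      using S' neighbours_subset_dag_blanket[of V E T] by blast+
    ultimately show "\<not> ci {x} {T} Z"
      by (intro dag_blanket_dependent)
  qed
  have "x \<in> ?B" if x: "x \<in> S''" for x
  proof (rule ccontr)
    assume "x \<notin> ?B"
    then have "?B \<subseteq> S'' - {x}" "S'' - {x} \<subseteq> V - {T}" "x \<in> V" "x \<noteq> T"
      using B S'' S' x by blast+
    then have "ci {x} {T} (S'' - {x})"
      using outside_dag_blanket_independent by blast
    then show False
      using backward_final[OF bwd x] by blast
  qed
  then show ?thesis
    using B by blast
qed

end

theorem theorem1:
  fixes V :: "'v set" and T :: 'v and ci :: "'v set \<Rightarrow> 'v set \<Rightarrow> 'v set \<Rightarrow> bool"
  assumes "finite V" and "T \<in> V"
    and "faithfully_representable V ci"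
    and "PFBP ci T (V - {T}) 2 out"
  shows "markov_blanket V ci T out \<and> (\<forall>S. markov_blanket V ci T S \<longrightarrow> S = out)"
proof -
  obtain E where faithful: "faithful_to V ci E"
    using assms(3) by (auto simp: faithfully_representable_def)
  have "pfbp_runs ci T (V - {T}) (Suc (Suc 0)) {} out"
    using assms(4) by (simp add: PFBP_def numeral_2_eq_2)
  then obtain S1 S2 where run1: "pfbp_run ci T (V - {T}) {} S1"
    and run2: "pfbp_run ci T (V - {T}) S1 S2" and runs0: "pfbp_runs ci T (V - {T}) 0 S2 out"
    by (elim pfbp_runs_SucE)
  from runs0 have "out = S2"
    by (rule pfbp_runs_0)
  also have "S2 = dag_blanket V E T"
    using pfbp_run_from_neighbours[OF faithful assms(2) run2] pfbp_run_subset[OF run1]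
      pfbp_run_selects_neighbours[OF faithful assms(2) run1] by blast
  finally show ?thesis
    using markov_blanket_iff[OF faithful assms(2)] by blast
qed

end
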